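(* Let $\mathbf p\sim\mathrm{DGEM}(M)$ and let $X_1,X_2\in\mathcal X$. Conditionally on $\mathbf p$, let $Y_{1,1}$ and $Y_{1,2}$ be independent with $\mathbb P(Y_{1,1}=j\mid\mathbf p)=p_j(X_1)$ and $\mathbb P(Y_{1,2}=j\mid\mathbf p)=p_j(X_2)$ for $j\ge1$. Let $\mu_M=\mu_M(X_1,X_2)=(M+1)^2\,\mathbb E\big(V(X_1)V(X_2)\big)$, where $V=V_1$ is one of the Beta processes of the construction. Then for positive integers $j\ne k$, $$\mathbb P(Y_{1,1}=j,Y_{1,2}=k)=\frac{(M+1-\mu_M)\,M^{|j-k|-1}\,(M^2-1+\mu_M)^{\min(j,k)-1}}{(M+1)^{j+k}},$$ and for every positive integer $j$, $$\mathbb P(Y_{1,1}=j,Y_{1,2}=j)=\frac{\mu_M\,(M^2-1+\mu_M)^{j-1}}{(M+1)^{2j}}.$$ Consequently $\mathbb P(Y_{1,1}=Y_{1,2})=\dfrac{\mu_M}{2M+2-\mu_M}$.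
   Context: Dependent GEM prior $\mathrm{DGEM}(M)$: let $\mathcal X\subset\mathbb R$ be the covariate space, $M>0$, $\sigma_Z>0$, and let $\tilde K_\lambda$ be a normalized covariance function on $\mathcal X$ (i.e. $\tilde K_\lambda(X,X)=1$) depending only on $X_1-X_2$, e.g. squared exponential $\exp(-(X_1-X_2)^2/(2\lambda^2))$, Ornstein–Uhlenbeck $\exp(-|X_1-X_2|/\lambda)$ or rational quadratic $(1+(X_1-X_2)^2/(2\lambda^2))^{-1}$. Let $Z_1,Z_2,\dots$ be i.i.d. centered Gaussian processes on $\mathcal X$ with covariance $\sigma_Z^2\tilde K_\lambda$. Let $\Phi_{\sigma_Z}$ be the CDF of $\mathcal N(0,\sigma_Z^2)$ and $F_M^{-1}(u)=1-(1-u)^{1/M}$ the inverse CDF of the $\mathrm{Beta}(1,M)$ distribution. Set $V_j(X)=F_M^{-1}(\Phi_{\sigma_Z}(Z_j(X)))$ (so each $V_j(X)\sim\mathrm{Beta}(1,M)$), and define by stick-breaking $p_1(X)=V_1(X)$, $p_j(X)=V_j(X)\prod_{l<j}(1-V_l(X))$ for $j>1$. *)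

theory Defs
  imports "HOL-Probability.Probability"
begin

definition centered_gaussian_process ::
  "'a measure \<Rightarrow> real set \<Rightarrow> (real \<Rightarrow> 'a \<Rightarrow> real) \<Rightarrow> (real \<Rightarrow> real \<Rightarrow> real) \<Rightarrow> bool" where
  "centered_gaussian_process M S Z C \<longleftrightarrow>
     (\<forall>x\<in>S. Z x \<in> borel_measurable M) \<and>
     (\<forall>xs cs. set xs \<subseteq> S \<longrightarrow> length cs = length xs \<longrightarrow>
        (let L = (\<lambda>\<omega>. \<Sum>i<length xs. cs ! i * Z (xs ! i) \<omega>);
             v = (\<Sum>i<length xs. \<Sum>l<length xs. cs ! i * cs ! l * C (xs ! i) (xs ! l))
         in if v = 0 then (AE \<omega> in M. L \<omega> = 0)
            else distributed M lborel L (normal_density 0 (sqrt v))))"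

definition Phi_normal :: "real \<Rightarrow> real \<Rightarrow> real" where
  "Phi_normal \<sigma> z = cdf (density lborel (normal_density 0 \<sigma>)) z"

text \<open>Inverse CDF of Beta(1,M).\<close>
definition beta1_inv_cdf :: "real \<Rightarrow> real \<Rightarrow> real" where
  "beta1_inv_cdf M u = 1 - (1 - u) powr (1 / M)"

definition dgem_V :: "real \<Rightarrow> real \<Rightarrow> (nat \<Rightarrow> real \<Rightarrow> 'a \<Rightarrow> real) \<Rightarrow> nat \<Rightarrow> real \<Rightarrow> 'a \<Rightarrow> real" where
  "dgem_V M \<sigma> Z j x \<omega> = beta1_inv_cdf M (Phi_normal \<sigma> (Z j x \<omega>))"

text \<open>Stick-breaking weights, indices j \<ge> 1.\<close>
definition dgem_p :: "real \<Rightarrow> real \<Rightarrow> (nat \<Rightarrow> real \<Rightarrow> 'a \<Rightarrow> real) \<Rightarrow> nat \<Rightarrow> real \<Rightarrow> 'a \<Rightarrow> real" where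
  "dgem_p M \<sigma> Z j x \<omega> = dgem_V M \<sigma> Z j x \<omega> * (\<Prod>l\<in>{1..<j}. (1 - dgem_V M \<sigma> Z l x \<omega>))"

definition dgem_sigma :: "'a measure \<Rightarrow> real \<Rightarrow> real \<Rightarrow> (nat \<Rightarrow> real \<Rightarrow> 'a \<Rightarrow> real) \<Rightarrow> real set \<Rightarrow> 'a set set" where
  "dgem_sigma P M \<sigma> Z S = sigma_sets (space P)
     {{\<omega> \<in> space P. dgem_p M \<sigma> Z j x \<omega> \<in> B} | j x B. j \<ge> 1 \<and> x \<in> S \<and> B \<in> sets borel}"

end

theory Submission
  imports Defs
begin

text \<open>
  Given the weights, P(Y11 = j, Y12 = k) = E[p_j(X1) p_k(X2)]. Over the common index range
  1..max j k both weights are products with one factor per stick, affine in V_l(X1) and in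
  V_l(X2) respectively, so independence of the sticks factorises the expectation into per-stick
  moments. These only involve E V_l(x) = 1/(M+1), by the probability integral transform, and
  the mixed moment E[V_l(X1) V_l(X2)], which does not depend on l since all pairs
  (Z_l(X1), Z_l(X2)) have the same Gaussian law. The diagonal probabilities then form a
  geometric series with ratio c = E[(1 - V_l(X1)) (1 - V_l(X2))] < 1; that Y11, Y12 \<ge> 1 almost
  surely follows from the double partial sums 1 - 2 (M/(M+1))^n + c^n \<longrightarrow> 1.
\<close>

section \<open>Product moments from the laws of linear combinations\<close>

lemma tilted_distribution:
  fixes W X :: "'a \<Rightarrow> real" and h :: "real \<Rightarrow> real"
  assumes "prob_space P"
    and [measurable]: "W \<in> borel_measurable P" "X \<in> borel_measurable P"
    and W_nonneg: "\<And>\<omega>. \<omega> \<in> space P \<Longrightarrow> 0 \<le> W \<omega>" and "integrable P W"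
    and a: "(\<integral>\<omega>. W \<omega> \<partial>P) = a" "0 < a"
  defines "Q \<equiv> distr (density P (\<lambda>\<omega>. W \<omega> / a)) borel X"
  shows "real_distribution Q"
    and "char Q t = (CLINT \<omega>|P. W \<omega> *\<^sub>R iexp (t * X \<omega>)) / a"
    and "h \<in> borel_measurable borel \<Longrightarrow> (\<integral>x. h x \<partial>Q) = (\<integral>\<omega>. W \<omega> * h (X \<omega>) \<partial>P) / a"
proof -
  have density_nonneg: "AE \<omega> in P. 0 \<le> W \<omega> / a"
    using W_nonneg a by auto
  have "prob_space (density P (\<lambda>\<omega>. W \<omega> / a))"
  proof (rule prob_spaceI)
    have "(\<integral>\<^sup>+\<omega>. ennreal (W \<omega> / a) \<partial>P) = ennreal (\<integral>\<omega>. W \<omega> / a \<partial>P)"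
      using density_nonneg \<open>integrable P W\<close> by (intro nn_integral_eq_integral) auto
    also have "\<dots> = 1" using a by simp
    finally show "emeasure (density P (\<lambda>\<omega>. W \<omega> / a)) (space (density P (\<lambda>\<omega>. W \<omega> / a))) = 1"
      by (simp add: emeasure_density)
  qed
  then show "real_distribution Q"
    by (auto simp: Q_def real_distribution_def real_distribution_axioms_def intro!: prob_space.prob_space_distr)
  have "char Q t = (CLINT \<omega>|P. (W \<omega> / a) *\<^sub>R iexp (t * X \<omega>))"
    unfolding char_def Q_def using density_nonneg by (simp add: integral_distr integral_density)
  also have "\<dots> = (CLINT \<omega>|P. W \<omega> *\<^sub>R iexp (t * X \<omega>)) / a"
    by (simp add: scaleR_conv_of_real divide_inverse_commute mult.assoc flip: divide_inverse)
  finally show "char Q t = (CLINT \<omega>|P. W \<omega> *\<^sub>R iexp (t * X \<omega>)) / a" .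
  show "(\<integral>x. h x \<partial>Q) = (\<integral>\<omega>. W \<omega> * h (X \<omega>) \<partial>P) / a" if [measurable]: "h \<in> borel_measurable borel"
    unfolding Q_def using density_nonneg by (simp add: integral_distr integral_density)
qed

lemma tilted_integral_eq_if_tilted_char_eq:
  fixes W W' X X' :: "'a \<Rightarrow> real" and h :: "real \<Rightarrow> real"
  assumes P: "prob_space P"
    and [measurable]: "W \<in> borel_measurable P" "W' \<in> borel_measurable P"
      "X \<in> borel_measurable P" "X' \<in> borel_measurable P" "h \<in> borel_measurable borel"
    and W: "\<And>\<omega>. \<omega> \<in> space P \<Longrightarrow> 1 \<le> W \<omega> \<and> W \<omega> \<le> c"
    and W': "\<And>\<omega>. \<omega> \<in> space P \<Longrightarrow> 1 \<le> W' \<omega> \<and> W' \<omega> \<le> c"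
    and char_eq: "\<And>t. (CLINT \<omega>|P. W \<omega> *\<^sub>R iexp (t * X \<omega>)) = (CLINT \<omega>|P. W' \<omega> *\<^sub>R iexp (t * X' \<omega>))"
  shows "(\<integral>\<omega>. W \<omega> * h (X \<omega>) \<partial>P) = (\<integral>\<omega>. W' \<omega> * h (X' \<omega>) \<partial>P)"
proof -
  interpret prob_space P by (rule P)
  have "\<bar>W \<omega>\<bar> \<le> c" "\<bar>W' \<omega>\<bar> \<le> c" if "\<omega> \<in> space P" for \<omega>
    using W[OF that] W'[OF that] by auto
  then have int: "integrable P W" "integrable P W'"
    by (auto intro!: integrable_const_bound[where B=c])
  define a where "a = (\<integral>\<omega>. W \<omega> \<partial>P)"
  have "a = (\<integral>\<omega>. W' \<omega> \<partial>P)"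
    using char_eq[of 0] by (simp add: a_def scaleR_conv_of_real)
  moreover have "1 \<le> a"
    using integral_mono[OF integrable_const int(1), of 1] W by (simp add: a_def prob_space)
  ultimately have a: "0 < a" "(\<integral>\<omega>. W \<omega> \<partial>P) = a" "(\<integral>\<omega>. W' \<omega> \<partial>P) = a"
    by (simp_all add: a_def)
  have nonneg: "0 \<le> W \<omega>" "0 \<le> W' \<omega>" if "\<omega> \<in> space P" for \<omega>
    using W[OF that] W'[OF that] by linarith+
  note Q = tilted_distribution[OF P _ _ nonneg(1) int(1) a(2,1)]
  note Q' = tilted_distribution[OF P _ _ nonneg(2) int(2) a(3,1)]
  have "distr (density P (\<lambda>\<omega>. W \<omega> / a)) borel X = distr (density P (\<lambda>\<omega>. W' \<omega> / a)) borel X'"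
  proof (rule Levy_uniqueness)
    show "char (distr (density P (\<lambda>\<omega>. W \<omega> / a)) borel X) = char (distr (density P (\<lambda>\<omega>. W' \<omega> / a)) borel X')"
      using char_eq by (simp add: fun_eq_iff Q(2) Q'(2))
  qed (simp_all add: Q(1) Q'(1))
  then have "(\<integral>\<omega>. W \<omega> * h (X \<omega>) \<partial>P) / a = (\<integral>\<omega>. W' \<omega> * h (X' \<omega>) \<partial>P) / a"
    by (simp flip: Q(3) Q'(3))
  with a show ?thesis by simp
qed

lemma integral_linear_comb_eq_if_distr_eq:
  fixes A B A' B' :: "'a \<Rightarrow> real" and h :: "real \<Rightarrow> 'b::{banach, second_countable_topology}"
  assumes [measurable]: "A \<in> borel_measurable P" "B \<in> borel_measurable P"
      "A' \<in> borel_measurable P" "B' \<in> borel_measurable P" "h \<in> borel_measurable borel"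
    and "distr P borel (\<lambda>\<omega>. s * A \<omega> + t * B \<omega>) = distr P borel (\<lambda>\<omega>. s * A' \<omega> + t * B' \<omega>)"
  shows "(\<integral>\<omega>. h (s * A \<omega> + t * B \<omega>) \<partial>P) = (\<integral>\<omega>. h (s * A' \<omega> + t * B' \<omega>) \<partial>P)"
  using assms(6) integral_distr[of "\<lambda>\<omega>. s * A \<omega> + t * B \<omega>" P borel h]
    integral_distr[of "\<lambda>\<omega>. s * A' \<omega> + t * B' \<omega>" P borel h]
  by simp

lemma iexp_eq_cos_sin: "iexp x = complex_of_real (cos x) + \<i> * complex_of_real (sin x)"
  by (simp add: exp_Euler cos_of_real sin_of_real)

lemma cos_weight_iexp:
  "(2 + cos (x + \<phi>)) *\<^sub>R iexp y = 2 * iexp y + (iexp \<phi> * iexp (x + y) + iexp (- \<phi>) * iexp (- x + y)) / 2"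
  unfolding iexp_eq_cos_sin
  by (simp add: cos_add sin_add cos_diff sin_diff complex_eq_iff field_simps)

lemma integral_cos_weight_iexp:
  fixes A B :: "'a \<Rightarrow> real"
  assumes "finite_measure P" and [measurable]: "A \<in> borel_measurable P" "B \<in> borel_measurable P"
  shows "(CLINT \<omega>|P. (2 + cos (u * A \<omega> + \<phi>)) *\<^sub>R iexp (t * B \<omega>)) =
    2 * (CLINT \<omega>|P. iexp (0 * A \<omega> + t * B \<omega>))
    + (iexp \<phi> * (CLINT \<omega>|P. iexp (u * A \<omega> + t * B \<omega>))
       + iexp (- \<phi>) * (CLINT \<omega>|P. iexp ((- u) * A \<omega> + t * B \<omega>))) / 2"
proof -
  have int: "integrable P (\<lambda>\<omega>. iexp (s * A \<omega> + t * B \<omega>))" for s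
    using assms(1) by (intro finite_measure.integrable_const_bound[where B=1]) auto
  show ?thesis
    unfolding cos_weight_iexp using int[of 0] int[of u] int[of "- u"]
    by (simp add: algebra_simps)
qed

text \<open>
  Tilting by the weight \<open>2 + cos (u A + \<phi>)\<close> turns the characteristic function of \<open>B\<close> into a
  combination of joint characteristic functions of \<open>(A, B)\<close>, so Levy's uniqueness theorem
  applies to the tilted laws of \<open>B\<close>.
\<close>

lemma integral_cos_mult_eq_if_linear_distr_eq:
  fixes A B A' B' :: "'a \<Rightarrow> real" and g :: "real \<Rightarrow> real"
  assumes P: "prob_space P"
    and m[measurable]: "A \<in> borel_measurable P" "B \<in> borel_measurable P"
      "A' \<in> borel_measurable P" "B' \<in> borel_measurable P" "g \<in> borel_measurable borel"
    and lin: "\<And>s t. distr P borel (\<lambda>\<omega>. s * A \<omega> + t * B \<omega>) = distr P borel (\<lambda>\<omega>. s * A' \<omega> + t * B' \<omega>)"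
    and g: "\<And>x. \<bar>g x\<bar> \<le> e"
  shows "(\<integral>\<omega>. cos (u * A \<omega> + \<phi>) * g (B \<omega>) \<partial>P) = (\<integral>\<omega>. cos (u * A' \<omega> + \<phi>) * g (B' \<omega>) \<partial>P)"
proof -
  interpret prob_space P by (rule P)
  note lin_eq = integral_linear_comb_eq_if_distr_eq[OF _ _ _ _ _ lin]
  have weight: "1 \<le> 2 + cos x \<and> 2 + cos x \<le> (3::real)" for x
    using cos_ge_minus_one[of x] cos_le_one[of x] by linarith
  have joint_char_eq: "(CLINT \<omega>|P. iexp (s * A \<omega> + t * B \<omega>)) = (CLINT \<omega>|P. iexp (s * A' \<omega> + t * B' \<omega>))"
    for s t using lin_eq[OF m(1-4), where h=iexp] by simp
  have "(\<integral>\<omega>. (2 + cos (u * A \<omega> + \<phi>)) * g (B \<omega>) \<partial>P) = (\<integral>\<omega>. (2 + cos (u * A' \<omega> + \<phi>)) * g (B' \<omega>) \<partial>P)"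
  proof (rule tilted_integral_eq_if_tilted_char_eq[OF P, where c=3 and X=B and X'=B' and h=g])
    show "(CLINT \<omega>|P. (2 + cos (u * A \<omega> + \<phi>)) *\<^sub>R iexp (t * B \<omega>)) =
      (CLINT \<omega>|P. (2 + cos (u * A' \<omega> + \<phi>)) *\<^sub>R iexp (t * B' \<omega>))" for t
      using integral_cos_weight_iexp[OF finite_measure_axioms m(1,2), of u \<phi> t]
        integral_cos_weight_iexp[OF finite_measure_axioms m(3,4), of u \<phi> t]
        joint_char_eq[of 0 t] joint_char_eq[of u t] joint_char_eq[of "- u" t]
      by argo
  qed (simp_all add: weight)
  moreover have "(\<integral>\<omega>. g (B \<omega>) \<partial>P) = (\<integral>\<omega>. g (B' \<omega>) \<partial>P)"
    using lin_eq[OF m, of 0 1] by simp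
  moreover have "(\<integral>\<omega>. (2 + cos (u * X \<omega> + \<phi>)) * g (Y \<omega>) \<partial>P)
      = 2 * (\<integral>\<omega>. g (Y \<omega>) \<partial>P) + (\<integral>\<omega>. cos (u * X \<omega> + \<phi>) * g (Y \<omega>) \<partial>P)"
    if [measurable]: "X \<in> borel_measurable P" "Y \<in> borel_measurable P" for X Y
  proof -
    have "\<bar>cos y * g z\<bar> \<le> e" for y z
      using mult_mono[OF abs_cos_le_one g] by (simp add: abs_mult)
    then have "integrable P (\<lambda>\<omega>. cos (u * X \<omega> + \<phi>) * g (Y \<omega>))"
      by (intro integrable_const_bound[where B=e]) simp_all
    moreover have "integrable P (\<lambda>\<omega>. g (Y \<omega>))"
      using g by (intro integrable_const_bound[where B=e]) simp_all
    ultimately show ?thesis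
      by (simp add: distrib_right)
  qed
  ultimately show ?thesis
    using m by simp
qed

lemma integral_weight_iexp_split:
  fixes A B :: "'a \<Rightarrow> real" and k :: "real \<Rightarrow> real"
  assumes "finite_measure P"
    and [measurable]: "A \<in> borel_measurable P" "B \<in> borel_measurable P" "k \<in> borel_measurable borel"
    and k: "\<And>x. \<bar>k x\<bar> \<le> 1"
  shows "(CLINT \<omega>|P. (1 + k (B \<omega>)) *\<^sub>R iexp (t * A \<omega>)) = (CLINT \<omega>|P. iexp (t * A \<omega>))
    + complex_of_real (\<integral>\<omega>. cos (t * A \<omega>) * k (B \<omega>) \<partial>P)
    + \<i> * complex_of_real (\<integral>\<omega>. sin (t * A \<omega>) * k (B \<omega>) \<partial>P)"
proof -
  interpret finite_measure P by (rule assms(1))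
  have "\<bar>cos x * k y\<bar> \<le> 1" "\<bar>sin x * k y\<bar> \<le> 1" for x y
    using k[of y] by (simp_all add: abs_mult mult_le_one)
  then have int: "integrable P (\<lambda>\<omega>. iexp (t * A \<omega>))"
    "integrable P (\<lambda>\<omega>. cos (t * A \<omega>) * k (B \<omega>))" "integrable P (\<lambda>\<omega>. sin (t * A \<omega>) * k (B \<omega>))"
    by (intro integrable_const_bound[where B=1]; simp)+
  have "(1 + k (B \<omega>)) *\<^sub>R iexp (t * A \<omega>) = iexp (t * A \<omega>)
    + complex_of_real (cos (t * A \<omega>) * k (B \<omega>)) + \<i> * complex_of_real (sin (t * A \<omega>) * k (B \<omega>))" for \<omega>
    unfolding iexp_eq_cos_sin by (simp add: complex_eq_iff algebra_simps)
  then show ?thesis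
    using int by (simp del: of_real_mult)
qed

lemma integral_mult_eq_if_linear_distr_eq:
  fixes A B A' B' :: "'a \<Rightarrow> real" and f k :: "real \<Rightarrow> real"
  assumes P: "prob_space P"
    and m[measurable]: "A \<in> borel_measurable P" "B \<in> borel_measurable P"
      "A' \<in> borel_measurable P" "B' \<in> borel_measurable P"
      "f \<in> borel_measurable borel" "k \<in> borel_measurable borel"
    and lin: "\<And>s t. distr P borel (\<lambda>\<omega>. s * A \<omega> + t * B \<omega>) = distr P borel (\<lambda>\<omega>. s * A' \<omega> + t * B' \<omega>)"
    and f: "\<And>x. \<bar>f x\<bar> \<le> d" and k: "\<And>x. 0 \<le> k x \<and> k x \<le> 1"
  shows "(\<integral>\<omega>. f (A \<omega>) * k (B \<omega>) \<partial>P) = (\<integral>\<omega>. f (A' \<omega>) * k (B' \<omega>) \<partial>P)"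
proof -
  interpret prob_space P by (rule P)
  note lin_eq = integral_linear_comb_eq_if_distr_eq[OF _ _ _ _ _ lin]
  have k_abs: "\<bar>k x\<bar> \<le> 1" for x
    using k[of x] by simp
  note cos_eq = integral_cos_mult_eq_if_linear_distr_eq[OF P m(1-4,6) lin k_abs]
  have sin_eq: "(\<integral>\<omega>. sin (t * A \<omega>) * k (B \<omega>) \<partial>P) = (\<integral>\<omega>. sin (t * A' \<omega>) * k (B' \<omega>) \<partial>P)" for t
    using cos_eq[of t "- (pi / 2)"] by (simp add: cos_diff)
  have "(\<integral>\<omega>. (1 + k (B \<omega>)) * f (A \<omega>) \<partial>P) = (\<integral>\<omega>. (1 + k (B' \<omega>)) * f (A' \<omega>) \<partial>P)"
  proof (rule tilted_integral_eq_if_tilted_char_eq[OF P, where c=2 and X=A and X'=A' and h=f])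
    show "(CLINT \<omega>|P. (1 + k (B \<omega>)) *\<^sub>R iexp (t * A \<omega>)) = (CLINT \<omega>|P. (1 + k (B' \<omega>)) *\<^sub>R iexp (t * A' \<omega>))" for t
      using integral_weight_iexp_split[OF finite_measure_axioms m(1,2,6) k_abs, of t]
        integral_weight_iexp_split[OF finite_measure_axioms m(3,4,6) k_abs, of t]
        lin_eq[OF m(1-4), where h=iexp and s=t and t=0] cos_eq[of t 0] sin_eq[of t]
      by simp
  qed (use k in simp_all)
  moreover have "(\<integral>\<omega>. (1 + k (Y \<omega>)) * f (X \<omega>) \<partial>P) = (\<integral>\<omega>. f (X \<omega>) \<partial>P) + (\<integral>\<omega>. f (X \<omega>) * k (Y \<omega>) \<partial>P)"
    if [measurable]: "X \<in> borel_measurable P" "Y \<in> borel_measurable P" for X Y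
  proof -
    have "\<bar>f x * k y\<bar> \<le> d" for x y
      using mult_mono[OF f k_abs] order_trans[OF abs_ge_zero f] by (simp add: abs_mult)
    then have "integrable P (\<lambda>\<omega>. f (X \<omega>) * k (Y \<omega>))"
      by (intro integrable_const_bound[where B=d]) simp_all
    moreover have "integrable P (\<lambda>\<omega>. f (X \<omega>))"
      using f by (intro integrable_const_bound[where B=d]) simp_all
    moreover have "(\<lambda>\<omega>. (1 + k (Y \<omega>)) * f (X \<omega>)) = (\<lambda>\<omega>. f (X \<omega>) + f (X \<omega>) * k (Y \<omega>))"
      by (simp add: fun_eq_iff algebra_simps)
    ultimately show ?thesis
      by simp
  qed
  moreover have "(\<integral>\<omega>. f (A \<omega>) \<partial>P) = (\<integral>\<omega>. f (A' \<omega>) \<partial>P)"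
    using lin_eq[OF m(1-5), of 1 0] by simp
  ultimately show ?thesis
    using m by simp
qed

section \<open>Beta(1, M) marginals\<close>

lemma (in cdf_distribution) cdf_pseudoinverse_eq:
  assumes atomless: "\<And>x. measure M {x} = 0" and u: "0 < u" "u < 1"
  shows "C (I u) = u"
proof (rule antisym)
  have le_iff: "u \<le> C x \<longleftrightarrow> I u \<le> x" for x
    using pseudoinverse[OF u] .
  show "u \<le> C (I u)"
    using le_iff[of "I u"] by blast
  show "C (I u) \<le> u"
  proof (rule tendsto_upperbound)
    have "isCont C (I u)"
      by (simp add: isCont_cdf atomless)
    then show "(C \<longlongrightarrow> C (I u)) (at_left (I u))"
      by (simp add: isCont_def filterlim_at_split)
    show "\<forall>\<^sub>F x in at_left (I u). C x \<le> u"
    proof (rule eventually_at_leftI[where a="I u - 1"])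
      fix x assume "x \<in> {I u - 1<..<I u}"
      then have "\<not> I u \<le> x"
        by simp
      then show "C x \<le> u"
        using le_iff[of x] by linarith
    qed simp
  qed simp
qed

lemma integral_cdf_transform:
  assumes "real_distribution N" and atomless: "\<And>x. measure N {x} = 0"
    and [measurable]: "h \<in> borel_measurable borel"
  shows "(\<integral>z. h (cdf N z) \<partial>N) = (LBINT u=0..1. h u)"
proof -
  interpret cdf_distribution N
    by (rule cdf_distribution.intro) fact
  have "(\<integral>z. h (C z) \<partial>N) = (\<integral>z. h (C z) \<partial>distr (restrict_space lborel {0<..<1::real}) borel I)"
    by (simp add: distr_I_eq_M)
  also have "\<dots> = (\<integral>u. h (C (I u)) \<partial>restrict_space lborel {0<..<1::real})"
    by (subst integral_distr) auto
  also have "\<dots> = (\<integral>u. h u \<partial>restrict_space lborel {0<..<1::real})"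
    by (intro Bochner_Integration.integral_cong refl)
      (simp add: space_restrict_space cdf_pseudoinverse_eq[OF atomless])
  also have "\<dots> = (LBINT u=0..1. h u)"
  proof -
    have "einterval 0 1 = {0<..<1::real}"
      by (auto simp: einterval_def)
    then show ?thesis
      by (simp add: interval_lebesgue_integral_def set_lebesgue_integral_def integral_restrict_space)
  qed
  finally show ?thesis .
qed

lemma beta1_inv_cdf_bounds:
  assumes "0 \<le> u" "u \<le> 1" "0 < M"
  shows "0 \<le> beta1_inv_cdf M u \<and> beta1_inv_cdf M u \<le> 1"
  using assms powr_le1[of "1 / M" "1 - u"] by (simp add: beta1_inv_cdf_def)

lemma interval_integral_beta1_inv_cdf:
  assumes M: "0 < M"
  shows "(LBINT u=0..1. beta1_inv_cdf M u) = 1 / (M + 1)"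
proof -
  define F where "F u = u + M / (M + 1) * (1 - u) powr ((M + 1) / M)" for u :: real
  have "(LBINT u=ereal 0..ereal 1. beta1_inv_cdf M u) = F 1 - F 0"
  proof (rule interval_integral_FTC_nonneg)
    fix x assume x: "ereal 0 < ereal x" "ereal x < ereal 1"
    have "(M + 1) / M - 1 = 1 / M"
      using M by (simp add: field_simps)
    then show "DERIV F x :> beta1_inv_cdf M x"
      unfolding F_def beta1_inv_cdf_def using x M
      by (auto intro!: derivative_eq_intros)
    show "isCont (beta1_inv_cdf M) x"
      unfolding beta1_inv_cdf_def using x by (auto intro!: continuous_intros)
  next
    show "AE x in lborel. ereal 0 < ereal x \<longrightarrow> ereal x < ereal 1 \<longrightarrow> 0 \<le> beta1_inv_cdf M x"
      using beta1_inv_cdf_bounds M by auto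
    show "((F \<circ> real_of_ereal) \<longlongrightarrow> F 0) (at_right (ereal 0))"
      unfolding ereal_tendsto_simps1 F_def using M
      by (auto intro!: tendsto_eq_intros)
    show "((F \<circ> real_of_ereal) \<longlongrightarrow> F 1) (at_left (ereal 1))"
      unfolding ereal_tendsto_simps1 F_def using M
      by (auto intro!: tendsto_eq_intros tendsto_zero_powrI eventually_at_leftI[where a=0])
  qed simp
  then show ?thesis
    using M by (simp add: F_def field_simps zero_ereal_def one_ereal_def)
qed

lemma Phi_normal_eq_cdf: "Phi_normal \<sigma> = cdf (density lborel (normal_density 0 \<sigma>))"
  by (simp add: Phi_normal_def fun_eq_iff)

lemma real_distribution_normal:
  "0 < \<sigma> \<Longrightarrow> real_distribution (density lborel (normal_density 0 \<sigma>))"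
  using prob_space_normal_density by (simp add: real_distribution_def real_distribution_axioms_def)

lemma Phi_normal_bounds_measurable:
  assumes "0 < \<sigma>"
  shows "0 \<le> Phi_normal \<sigma> z" "Phi_normal \<sigma> z \<le> 1" "Phi_normal \<sigma> \<in> borel_measurable borel"
proof -
  interpret cdf_distribution "density lborel (normal_density 0 \<sigma>)"
    using real_distribution_normal[OF assms] by (rule cdf_distribution.intro)
  show "0 \<le> Phi_normal \<sigma> z" "Phi_normal \<sigma> z \<le> 1" "Phi_normal \<sigma> \<in> borel_measurable borel"
    by (simp_all add: Phi_normal_eq_cdf cdf_nonneg cdf_bounded_prob)
qed

lemma borel_measurable_beta1_inv_cdf: "beta1_inv_cdf M \<in> borel_measurable borel"
  unfolding beta1_inv_cdf_def by measurable

lemma borel_measurable_beta1_inv_cdf_Phi_normal: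
  "0 < \<sigma> \<Longrightarrow> (\<lambda>z. beta1_inv_cdf M (Phi_normal \<sigma> z)) \<in> borel_measurable borel"
  using measurable_compose[OF Phi_normal_bounds_measurable(3) borel_measurable_beta1_inv_cdf] .

lemma integral_beta1_inv_cdf_Phi_normal:
  assumes "0 < \<sigma>" "0 < M" and Zx: "distributed P lborel Zx (normal_density 0 \<sigma>)"
  shows "(\<integral>\<omega>. beta1_inv_cdf M (Phi_normal \<sigma> (Zx \<omega>)) \<partial>P) = 1 / (M + 1)"
proof -
  define N where "N = density lborel (normal_density 0 \<sigma>)"
  have "(\<integral>\<omega>. beta1_inv_cdf M (Phi_normal \<sigma> (Zx \<omega>)) \<partial>P)
      = (\<integral>z. beta1_inv_cdf M (Phi_normal \<sigma> z) \<partial>distr P lborel Zx)"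
    using distributed_measurable[OF Zx] borel_measurable_beta1_inv_cdf_Phi_normal[OF assms(1)]
    by (simp add: integral_distr)
  also have "\<dots> = (\<integral>z. beta1_inv_cdf M (cdf N z) \<partial>N)"
    using distributed_distr_eq_density[OF Zx] by (simp add: N_def Phi_normal_eq_cdf)
  also have "\<dots> = (LBINT u=0..1. beta1_inv_cdf M u)"
    using real_distribution_normal[OF assms(1)] borel_measurable_beta1_inv_cdf
    by (intro integral_cdf_transform) (simp_all add: N_def measure_def emeasure_density)
  finally show ?thesis
    using interval_integral_beta1_inv_cdf[OF assms(2)] by simp
qed

lemma centered_gaussian_process_measurable:
  "centered_gaussian_process P S Z C \<Longrightarrow> x \<in> S \<Longrightarrow> Z x \<in> borel_measurable P"
  by (simp add: centered_gaussian_process_def)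

lemma centered_gaussian_process_linear_comb:
  assumes "centered_gaussian_process P S Z C" "set xs \<subseteq> S" "length cs = length xs"
  shows "let L = (\<lambda>\<omega>. \<Sum>i<length xs. cs ! i * Z (xs ! i) \<omega>);
           v = (\<Sum>i<length xs. \<Sum>l<length xs. cs ! i * cs ! l * C (xs ! i) (xs ! l))
         in if v = 0 then (AE \<omega> in P. L \<omega> = 0) else distributed P lborel L (normal_density 0 (sqrt v))"
  using assms by (simp add: centered_gaussian_process_def)

lemma centered_gaussian_process_distributed:
  assumes "centered_gaussian_process P S Z C" "x \<in> S" "C x x \<noteq> 0"
  shows "distributed P lborel (Z x) (normal_density 0 (sqrt (C x x)))"
  using centered_gaussian_process_linear_comb[OF assms(1), of "[x]" "[1]"] assms(2,3)
  by (simp add: Let_def)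

lemma centered_gaussian_process_pair:
  fixes s t :: real
  assumes "centered_gaussian_process P S Z C" "x \<in> S" "y \<in> S"
  shows "if s * s * C x x + s * t * C x y + (t * s * C y x + t * t * C y y) = 0
      then AE \<omega> in P. s * Z x \<omega> + t * Z y \<omega> = 0
      else distributed P lborel (\<lambda>\<omega>. s * Z x \<omega> + t * Z y \<omega>)
        (normal_density 0 (sqrt (s * s * C x x + s * t * C x y + (t * s * C y x + t * t * C y y))))"
  using centered_gaussian_process_linear_comb[OF assms(1), of "[x, y]" "[s, t]"] assms(2,3)
  by (simp add: Let_def numeral_2_eq_2 lessThan_Suc ac_simps)

lemma centered_gaussian_process_distr_eq:
  assumes Z: "centered_gaussian_process P S Z C" and Z': "centered_gaussian_process P S Z' C"
    and xy: "x \<in> S" "y \<in> S"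
  shows "distr P borel (\<lambda>\<omega>. s * Z x \<omega> + t * Z y \<omega>) = distr P borel (\<lambda>\<omega>. s * Z' x \<omega> + t * Z' y \<omega>)"
proof -
  have [measurable]: "Z x \<in> borel_measurable P" "Z y \<in> borel_measurable P"
    "Z' x \<in> borel_measurable P" "Z' y \<in> borel_measurable P"
    using Z Z' xy by (simp_all add: centered_gaussian_process_measurable)
  define v where "v = s * s * C x x + s * t * C x y + (t * s * C y x + t * t * C y y)"
  note law = centered_gaussian_process_pair[OF Z xy, of s t, folded v_def]
    centered_gaussian_process_pair[OF Z' xy, of s t, folded v_def]
  show ?thesis
  proof (cases "v = 0")
    case True
    then have "distr P borel (\<lambda>\<omega>. s * Z x \<omega> + t * Z y \<omega>) = distr P borel (\<lambda>\<omega>. 0)"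
      "distr P borel (\<lambda>\<omega>. s * Z' x \<omega> + t * Z' y \<omega>) = distr P borel (\<lambda>\<omega>. 0)"
      using law by (auto intro!: distr_cong_AE)
    then show ?thesis by simp
  next
    case False
    then have "distr P lborel (\<lambda>\<omega>. s * Z x \<omega> + t * Z y \<omega>) = distr P lborel (\<lambda>\<omega>. s * Z' x \<omega> + t * Z' y \<omega>)"
      using law by (simp add: distributed_distr_eq_density)
    then show ?thesis
      by (simp cong: distr_cong)
  qed
qed

section \<open>Stick-breaking weights\<close>

definition stick_weight :: "(nat \<Rightarrow> real) \<Rightarrow> nat \<Rightarrow> real" where
  "stick_weight v j = v j * (\<Prod>l\<in>{1..<j}. 1 - v l)"

definition stick_factor :: "nat \<Rightarrow> nat \<Rightarrow> real \<Rightarrow> real" where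
  "stick_factor j l x = (if l < j then 1 - x else if l = j then x else 1)"

lemma sum_stick_weight: "(\<Sum>j\<in>{1..n}. stick_weight v j) = 1 - (\<Prod>l\<in>{1..n}. 1 - v l)"
proof (induction n)
  case (Suc n)
  have "{1..Suc n} = insert (Suc n) {1..n}" "{1..<Suc n} = {1..n}"
    by auto
  with Suc show ?case
    by (simp add: stick_weight_def algebra_simps)
qed simp

lemma stick_weight_eq_prod_stick_factor:
  assumes "1 \<le> j" "j \<le> n"
  shows "stick_weight v j = (\<Prod>l\<in>{1..n}. stick_factor j l (v l))"
proof -
  have "(\<Prod>l\<in>{1..n}. stick_factor j l (v l)) = (\<Prod>l\<in>insert j {1..<j}. stick_factor j l (v l))"
    using assms by (intro prod.mono_neutral_right) (auto simp: stick_factor_def)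
  also have "\<dots> = v j * (\<Prod>l\<in>{1..<j}. stick_factor j l (v l))"
    by (simp add: stick_factor_def)
  also have "\<dots> = stick_weight v j"
    unfolding stick_weight_def by (simp add: stick_factor_def)
  finally show ?thesis ..
qed

lemma stick_factor_affine:
  "stick_factor j l x = stick_factor j l 0 + (stick_factor j l 1 - stick_factor j l 0) * x"
  by (simp add: stick_factor_def)

lemma stick_weight_mult_eq_prod_affine:
  assumes "1 \<le> j" "1 \<le> k" "j \<le> n" "k \<le> n"
  shows "stick_weight v j * stick_weight w k
    = (\<Prod>l\<in>{1..n}. (stick_factor j l 0 + (stick_factor j l 1 - stick_factor j l 0) * v l)
        * (stick_factor k l 0 + (stick_factor k l 1 - stick_factor k l 0) * w l))"
  using assms by (simp add: stick_weight_eq_prod_stick_factor[of _ n] prod.distrib flip: stick_factor_affine)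

lemma prod_split_at_two_points:
  fixes f :: "nat \<Rightarrow> 'a::comm_monoid_mult"
  assumes "1 \<le> j" "j < k"
  shows "(\<Prod>l\<in>{1..k}. f l) = (\<Prod>l\<in>{1..<j}. f l) * f j * (\<Prod>l\<in>{Suc j..<k}. f l) * f k"
proof -
  have "(\<Prod>l\<in>{1..k}. f l) = (\<Prod>l\<in>{1..<k}. f l) * f k"
    using assms by (simp add: atLeastLessThanSuc_atLeastAtMost[symmetric] prod.atLeastLessThan_Suc)
  also have "(\<Prod>l\<in>{1..<k}. f l) = (\<Prod>l\<in>{1..<j}. f l) * (\<Prod>l\<in>{j..<k}. f l)"
    using assms by (simp add: prod.atLeastLessThan_concat)
  also have "(\<Prod>l\<in>{j..<k}. f l) = f j * (\<Prod>l\<in>{Suc j..<k}. f l)"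
    using assms by (simp add: prod.atLeast_Suc_lessThan)
  finally show ?thesis
    by (simp add: mult.assoc)
qed

lemma prod_piecewise_four:
  fixes A B C D :: real
  assumes "1 \<le> j" "j < k"
  shows "(\<Prod>l\<in>{1..k}. if l < j then A else if l = j then B else if l < k then C else D)
    = A ^ (j - 1) * B * C ^ (k - j - 1) * D"
proof -
  have "(\<Prod>l\<in>{1..<j}. if l < j then A else if l = j then B else if l < k then C else D) = A ^ (j - 1)"
    by (subst prod.cong[OF refl, where h="\<lambda>_. A"]) auto
  moreover have "(\<Prod>l\<in>{Suc j..<k}. if l < j then A else if l = j then B else if l < k then C else D)
      = C ^ (k - j - 1)"
    by (subst prod.cong[OF refl, where h="\<lambda>_. C"]) auto
  ultimately show ?thesis
    unfolding prod_split_at_two_points[OF assms] using assms by simp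
qed

lemma prod_piecewise_two:
  fixes A B :: real
  assumes "1 \<le> j"
  shows "(\<Prod>l\<in>{1..j}. if l < j then A else B) = A ^ (j - 1) * B"
proof -
  have "{1..j} = insert j {1..<j}"
    using assms by auto
  moreover have "(\<Prod>l\<in>{1..<j}. if l < j then A else B) = A ^ (j - 1)"
    by (subst prod.cong[OF refl, where h="\<lambda>_. A"]) auto
  ultimately show ?thesis
    by simp
qed

lemma affine_nonneg_on_unit_interval:
  fixes \<alpha> \<beta> x :: real
  assumes "0 \<le> \<alpha>" "0 \<le> \<alpha> + \<beta>" "0 \<le> x" "x \<le> 1"
  shows "0 \<le> \<alpha> + \<beta> * x"
proof -
  have "\<alpha> + \<beta> * x = (1 - x) * \<alpha> + x * (\<alpha> + \<beta>)"
    by (simp add: algebra_simps)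
  then show ?thesis
    using assms by simp
qed

section \<open>Independent pairs of sticks\<close>

text \<open>\<open>V l\<close> and \<open>W l\<close> play the roles of \<open>V\<^sub>l(X\<^sub>1)\<close> and \<open>V\<^sub>l(X\<^sub>2)\<close>.\<close>

locale indep_unit_pairs = prob_space +
  fixes V W :: "nat \<Rightarrow> 'a \<Rightarrow> real" and a b m :: real
  assumes measurable_V [measurable]: "\<And>l. 1 \<le> l \<Longrightarrow> V l \<in> borel_measurable M"
    and measurable_W [measurable]: "\<And>l. 1 \<le> l \<Longrightarrow> W l \<in> borel_measurable M"
    and unit_V: "\<And>l \<omega>. 1 \<le> l \<Longrightarrow> \<omega> \<in> space M \<Longrightarrow> 0 \<le> V l \<omega> \<and> V l \<omega> \<le> 1"
    and unit_W: "\<And>l \<omega>. 1 \<le> l \<Longrightarrow> \<omega> \<in> space M \<Longrightarrow> 0 \<le> W l \<omega> \<and> W l \<omega> \<le> 1"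
    and indep_pairs: "indep_vars (\<lambda>_. borel \<Otimes>\<^sub>M borel) (\<lambda>l \<omega>. (V l \<omega>, W l \<omega>)) {1..}"
    and expectation_V: "\<And>l. 1 \<le> l \<Longrightarrow> expectation (V l) = a"
    and expectation_W: "\<And>l. 1 \<le> l \<Longrightarrow> expectation (W l) = b"
    and expectation_VW: "\<And>l. 1 \<le> l \<Longrightarrow> expectation (\<lambda>\<omega>. V l \<omega> * W l \<omega>) = m"
begin

lemma integrable_affine_mult:
  assumes "1 \<le> l"
  shows "integrable M (\<lambda>\<omega>. (\<alpha> + \<beta> * V l \<omega>) * (\<gamma> + \<delta> * W l \<omega>))"
proof (rule integrable_const_bound[where B="(\<bar>\<alpha>\<bar> + \<bar>\<beta>\<bar>) * (\<bar>\<gamma>\<bar> + \<bar>\<delta>\<bar>)"])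
  have "\<bar>\<alpha> + \<beta> * x\<bar> \<le> \<bar>\<alpha>\<bar> + \<bar>\<beta>\<bar>" if "0 \<le> x" "x \<le> 1" for \<alpha> \<beta> x :: real
    using that abs_triangle_ineq[of \<alpha> "\<beta> * x"] mult_left_le[of x "\<bar>\<beta>\<bar>"] by (simp add: abs_mult)
  then show "AE \<omega> in M. norm ((\<alpha> + \<beta> * V l \<omega>) * (\<gamma> + \<delta> * W l \<omega>)) \<le> (\<bar>\<alpha>\<bar> + \<bar>\<beta>\<bar>) * (\<bar>\<gamma>\<bar> + \<bar>\<delta>\<bar>)"
    using unit_V[OF assms] unit_W[OF assms] by (auto simp: abs_mult intro!: mult_mono)
qed (use assms in measurable)

lemma expectation_affine_mult:
  assumes "1 \<le> l"
  shows "expectation (\<lambda>\<omega>. (\<alpha> + \<beta> * V l \<omega>) * (\<gamma> + \<delta> * W l \<omega>))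
    = \<alpha> * \<gamma> + \<alpha> * \<delta> * b + \<beta> * \<gamma> * a + \<beta> * \<delta> * m"
proof -
  have int: "integrable M (V l)" "integrable M (W l)" "integrable M (\<lambda>\<omega>. V l \<omega> * W l \<omega>)"
    using integrable_affine_mult[OF assms, of 0 1 1 0] integrable_affine_mult[OF assms, of 1 0 0 1]
      integrable_affine_mult[OF assms, of 0 1 0 1] by simp_all
  have "(\<lambda>\<omega>. (\<alpha> + \<beta> * V l \<omega>) * (\<gamma> + \<delta> * W l \<omega>))
      = (\<lambda>\<omega>. \<alpha> * \<gamma> + \<alpha> * \<delta> * W l \<omega> + \<beta> * \<gamma> * V l \<omega> + \<beta> * \<delta> * (V l \<omega> * W l \<omega>))"
    by (simp add: fun_eq_iff algebra_simps)
  then show ?thesis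
    using int assms by (simp add: expectation_V expectation_W expectation_VW prob_space)
qed

lemma indep_vars_affine_mult:
  assumes "J \<subseteq> {1..}"
  shows "indep_vars (\<lambda>_. borel) (\<lambda>l \<omega>. (\<alpha> l + \<beta> l * V l \<omega>) * (\<gamma> l + \<delta> l * W l \<omega>)) J"
proof -
  have "indep_vars (\<lambda>_. borel) (\<lambda>l \<omega>. (\<lambda>(v, w). (\<alpha> l + \<beta> l * v) * (\<gamma> l + \<delta> l * w)) (V l \<omega>, W l \<omega>)) J"
    using assms by (intro indep_vars_compose2[OF indep_vars_subset[OF indep_pairs]]) auto
  then show ?thesis
    by simp
qed

lemma integrable_prod_affine_mult:
  assumes "finite J" "J \<subseteq> {1..}"
  shows "integrable M (\<lambda>\<omega>. \<Prod>l\<in>J. (\<alpha> l + \<beta> l * V l \<omega>) * (\<gamma> l + \<delta> l * W l \<omega>))"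
  using assms by (intro indep_vars_integrable indep_vars_affine_mult integrable_affine_mult) auto

lemma expectation_prod_affine_mult:
  assumes "finite J" "J \<subseteq> {1..}"
  shows "expectation (\<lambda>\<omega>. \<Prod>l\<in>J. (\<alpha> l + \<beta> l * V l \<omega>) * (\<gamma> l + \<delta> l * W l \<omega>))
    = (\<Prod>l\<in>J. \<alpha> l * \<gamma> l + \<alpha> l * \<delta> l * b + \<beta> l * \<gamma> l * a + \<beta> l * \<delta> l * m)"
proof -
  have "expectation (\<lambda>\<omega>. \<Prod>l\<in>J. (\<alpha> l + \<beta> l * V l \<omega>) * (\<gamma> l + \<delta> l * W l \<omega>))
      = (\<Prod>l\<in>J. expectation (\<lambda>\<omega>. (\<alpha> l + \<beta> l * V l \<omega>) * (\<gamma> l + \<delta> l * W l \<omega>)))"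
    using assms by (intro indep_vars_lebesgue_integral indep_vars_affine_mult integrable_affine_mult) auto
  also have "\<dots> = (\<Prod>l\<in>J. \<alpha> l * \<gamma> l + \<alpha> l * \<delta> l * b + \<beta> l * \<gamma> l * a + \<beta> l * \<delta> l * m)"
    using assms(2) by (intro prod.cong refl expectation_affine_mult) auto
  finally show ?thesis .
qed

lemma expectation_stick_weight_mult_eq_prod:
  assumes "1 \<le> j" "1 \<le> k" "j \<le> n" "k \<le> n"
  shows "expectation (\<lambda>\<omega>. stick_weight (\<lambda>l. V l \<omega>) j * stick_weight (\<lambda>l. W l \<omega>) k)
    = (\<Prod>l\<in>{1..n}.
        let f0 = stick_factor j l 0; f1 = stick_factor j l 1; g0 = stick_factor k l 0; g1 = stick_factor k l 1
        in f0 * g0 + f0 * (g1 - g0) * b + (f1 - f0) * g0 * a + (f1 - f0) * (g1 - g0) * m)"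
  unfolding stick_weight_mult_eq_prod_affine[OF assms] by (simp add: expectation_prod_affine_mult Let_def)

lemma integrable_stick_weight_mult:
  assumes "1 \<le> j" "1 \<le> k"
  shows "integrable M (\<lambda>\<omega>. stick_weight (\<lambda>l. V l \<omega>) j * stick_weight (\<lambda>l. W l \<omega>) k)"
  unfolding stick_weight_mult_eq_prod_affine[OF assms max.cobounded1 max.cobounded2]
  by (rule integrable_prod_affine_mult) auto

lemma expectation_stick_weight_mult_less:
  assumes "1 \<le> j" "j < k"
  shows "expectation (\<lambda>\<omega>. stick_weight (\<lambda>l. V l \<omega>) j * stick_weight (\<lambda>l. W l \<omega>) k)
    = (1 - a - b + m) ^ (j - 1) * (a - m) * (1 - b) ^ (k - j - 1) * b"
proof -
  have "expectation (\<lambda>\<omega>. stick_weight (\<lambda>l. V l \<omega>) j * stick_weight (\<lambda>l. W l \<omega>) k)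
      = (\<Prod>l\<in>{1..k}. if l < j then 1 - a - b + m else if l = j then a - m else if l < k then 1 - b else b)"
  proof -
    have "1 \<le> k" "j \<le> k"
      using assms by simp_all
    then show ?thesis
      unfolding expectation_stick_weight_mult_eq_prod[OF assms(1) \<open>1 \<le> k\<close> \<open>j \<le> k\<close> order_refl]
      using assms by (intro prod.cong) (auto simp: stick_factor_def Let_def)
  qed
  then show ?thesis
    using prod_piecewise_four[OF assms] by simp
qed

lemma expectation_stick_weight_mult_diag:
  assumes "1 \<le> j"
  shows "expectation (\<lambda>\<omega>. stick_weight (\<lambda>l. V l \<omega>) j * stick_weight (\<lambda>l. W l \<omega>) j)
    = (1 - a - b + m) ^ (j - 1) * m"
proof -
  have "expectation (\<lambda>\<omega>. stick_weight (\<lambda>l. V l \<omega>) j * stick_weight (\<lambda>l. W l \<omega>) j)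
      = (\<Prod>l\<in>{1..j}. if l < j then 1 - a - b + m else m)"
    unfolding expectation_stick_weight_mult_eq_prod[OF assms assms order_refl order_refl]
    by (intro prod.cong) (auto simp: stick_factor_def Let_def)
  then show ?thesis
    using prod_piecewise_two[OF assms] by simp
qed

lemma indep_unit_pairs_swap: "indep_unit_pairs M W V b a m"
proof
  have "indep_vars (\<lambda>_. borel \<Otimes>\<^sub>M borel) (\<lambda>l \<omega>. (\<lambda>(v, w). (w, v)) (V l \<omega>, W l \<omega>)) {1..}"
    by (rule indep_vars_compose2[OF indep_pairs]) (simp add: measurable_pair_swap')
  then show "indep_vars (\<lambda>_. borel \<Otimes>\<^sub>M borel) (\<lambda>l \<omega>. (W l \<omega>, V l \<omega>)) {1..}"
    by simp
qed (simp_all add: unit_V unit_W expectation_V expectation_W expectation_VW mult.commute)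

lemma expectation_stick_weight_mult_neq:
  assumes "a = b" "1 \<le> j" "1 \<le> k" "j \<noteq> k"
  shows "expectation (\<lambda>\<omega>. stick_weight (\<lambda>l. V l \<omega>) j * stick_weight (\<lambda>l. W l \<omega>) k)
    = (1 - a - b + m) ^ (min j k - 1) * (a - m) * (1 - a) ^ (max j k - min j k - 1) * a"
proof (cases "j < k")
  case True
  then show ?thesis
    using expectation_stick_weight_mult_less[OF assms(2) True] assms(1) by simp
next
  case False
  interpret swapped: indep_unit_pairs M W V b a m
    by (rule indep_unit_pairs_swap)
  from False assms have "k < j" by simp
  then show ?thesis
    using swapped.expectation_stick_weight_mult_less[OF assms(3)] assms(1)
    by (simp add: mult.commute min_def max_def algebra_simps)
qed

lemma expectation_affine_mult_nonneg:
  fixes l :: nat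
  assumes "1 \<le> l" "0 \<le> \<alpha>" "0 \<le> \<alpha> + \<beta>" "0 \<le> \<gamma>" "0 \<le> \<gamma> + \<delta>"
  shows "0 \<le> \<alpha> * \<gamma> + \<alpha> * \<delta> * b + \<beta> * \<gamma> * a + \<beta> * \<delta> * m"
proof -
  have "0 \<le> \<alpha> + \<beta> * x" if "0 \<le> x" "x \<le> 1" for x
    using affine_nonneg_on_unit_interval[OF assms(2,3) that] .
  moreover have "0 \<le> \<gamma> + \<delta> * x" if "0 \<le> x" "x \<le> 1" for x
    using affine_nonneg_on_unit_interval[OF assms(4,5) that] .
  ultimately have "0 \<le> expectation (\<lambda>\<omega>. (\<alpha> + \<beta> * V l \<omega>) * (\<gamma> + \<delta> * W l \<omega>))"
    using unit_V[OF assms(1)] unit_W[OF assms(1)] by (intro integral_nonneg_AE AE_I2) simp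
  then show ?thesis
    by (simp add: expectation_affine_mult[OF assms(1)])
qed

lemma moment_bounds: "a \<le> 1" "b \<le> 1" "0 \<le> 1 - a - b + m" "m \<le> b"
  using expectation_affine_mult_nonneg[OF order_refl, of 1 "-1" 1 0]
    expectation_affine_mult_nonneg[OF order_refl, of 1 0 1 "-1"]
    expectation_affine_mult_nonneg[OF order_refl, of 1 "-1" 1 "-1"]
    expectation_affine_mult_nonneg[OF order_refl, of 1 "-1" 0 1]
  by simp_all

lemma sum_expectation_stick_weight_mult:
  "(\<Sum>j\<in>{1..n}. \<Sum>k\<in>{1..n}.
      expectation (\<lambda>\<omega>. stick_weight (\<lambda>l. V l \<omega>) j * stick_weight (\<lambda>l. W l \<omega>) k))
    = 1 - (1 - a) ^ n - (1 - b) ^ n + (1 - a - b + m) ^ n"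
proof -
  let ?P = "\<lambda>\<alpha> \<beta> \<gamma> \<delta> \<omega>. \<Prod>l\<in>{1..n}. (\<alpha> + \<beta> * V l \<omega>) * (\<gamma> + \<delta> * W l \<omega>)"
  have J: "finite {1..n}" "{1..n} \<subseteq> {1::nat..}"
    by auto
  note int = integrable_prod_affine_mult[OF J]
  have "expectation (\<lambda>\<omega>. (\<Sum>j\<in>{1..n}. stick_weight (\<lambda>l. V l \<omega>) j) * (\<Sum>k\<in>{1..n}. stick_weight (\<lambda>l. W l \<omega>) k))
    = (\<Sum>j\<in>{1..n}. expectation (\<lambda>\<omega>. \<Sum>k\<in>{1..n}. stick_weight (\<lambda>l. V l \<omega>) j * stick_weight (\<lambda>l. W l \<omega>) k))"
    unfolding sum_product
    by (rule Bochner_Integration.integral_sum)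
      (auto intro!: Bochner_Integration.integrable_sum integrable_stick_weight_mult)
  also have "\<dots> = (\<Sum>j\<in>{1..n}. \<Sum>k\<in>{1..n}.
      expectation (\<lambda>\<omega>. stick_weight (\<lambda>l. V l \<omega>) j * stick_weight (\<lambda>l. W l \<omega>) k))"
    by (intro sum.cong refl Bochner_Integration.integral_sum) (auto intro: integrable_stick_weight_mult)
  finally have "(\<Sum>j\<in>{1..n}. \<Sum>k\<in>{1..n}.
      expectation (\<lambda>\<omega>. stick_weight (\<lambda>l. V l \<omega>) j * stick_weight (\<lambda>l. W l \<omega>) k))
    = expectation (\<lambda>\<omega>. (\<Sum>j\<in>{1..n}. stick_weight (\<lambda>l. V l \<omega>) j) * (\<Sum>k\<in>{1..n}. stick_weight (\<lambda>l. W l \<omega>) k))" ..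
  also have "\<dots> = expectation (\<lambda>\<omega>. ?P 1 0 1 0 \<omega> - ?P 1 (-1) 1 0 \<omega> - ?P 1 0 1 (-1) \<omega> + ?P 1 (-1) 1 (-1) \<omega>)"
    unfolding sum_stick_weight prod.distrib by (simp add: algebra_simps)
  also have "\<dots> = expectation (?P 1 0 1 0) - expectation (?P 1 (-1) 1 0) - expectation (?P 1 0 1 (-1))
      + expectation (?P 1 (-1) 1 (-1))"
    using int[of "\<lambda>_. 1" "\<lambda>_. 0" "\<lambda>_. 1" "\<lambda>_. 0"] int[of "\<lambda>_. 1" "\<lambda>_. -1" "\<lambda>_. 1" "\<lambda>_. 0"]
      int[of "\<lambda>_. 1" "\<lambda>_. 0" "\<lambda>_. 1" "\<lambda>_. -1"] int[of "\<lambda>_. 1" "\<lambda>_. -1" "\<lambda>_. 1" "\<lambda>_. -1"]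
    by simp
  also have "\<dots> = 1 - (1 - a) ^ n - (1 - b) ^ n + (1 - a - b + m) ^ n"
    unfolding expectation_prod_affine_mult[OF J] by (simp add: algebra_simps)
  finally show ?thesis .
qed

lemma tendsto_sum_expectation_stick_weight_mult:
  assumes "0 < a" "0 < b"
  shows "(\<lambda>n. \<Sum>j\<in>{1..n}. \<Sum>k\<in>{1..n}.
      expectation (\<lambda>\<omega>. stick_weight (\<lambda>l. V l \<omega>) j * stick_weight (\<lambda>l. W l \<omega>) k)) \<longlonglongrightarrow> 1"
proof -
  have "(\<lambda>n. 1 - (1 - a) ^ n - (1 - b) ^ n + (1 - a - b + m) ^ n) \<longlonglongrightarrow> 1 - 0 - 0 + 0"
    using assms moment_bounds by (intro tendsto_intros LIMSEQ_power_zero) auto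
  then show ?thesis
    unfolding sum_expectation_stick_weight_mult by simp
qed

lemma sums_expectation_stick_weight_diag:
  assumes "0 < a"
  shows "(\<lambda>j. expectation (\<lambda>\<omega>. stick_weight (\<lambda>l. V l \<omega>) (Suc j) * stick_weight (\<lambda>l. W l \<omega>) (Suc j)))
    sums (m / (a + b - m))"
proof -
  have "norm (1 - a - b + m) < 1"
    using assms moment_bounds by auto
  then have "(\<lambda>j. (1 - a - b + m) ^ j * m) sums (1 / (1 - (1 - a - b + m)) * m)"
    by (intro sums_mult2 geometric_sums)
  then show ?thesis
    by (simp add: expectation_stick_weight_mult_diag add_diff_eq)
qed

end

section \<open>The dependent GEM prior\<close>

lemma sums_prob_diagonal:
  fixes Y1 Y2 :: "'a \<Rightarrow> nat"
  assumes "prob_space P"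
    and [measurable]: "Y1 \<in> measurable P (count_space UNIV)" "Y2 \<in> measurable P (count_space UNIV)"
    and joint: "\<And>j k. 1 \<le> j \<Longrightarrow> 1 \<le> k \<Longrightarrow> measure P {\<omega> \<in> space P. Y1 \<omega> = j \<and> Y2 \<omega> = k} = \<pi> j k"
    and total: "(\<lambda>n. \<Sum>j\<in>{1..n}. \<Sum>k\<in>{1..n}. \<pi> j k) \<longlonglongrightarrow> 1"
  shows "(\<lambda>j. \<pi> (Suc j) (Suc j)) sums measure P {\<omega> \<in> space P. Y1 \<omega> = Y2 \<omega>}"
proof -
  interpret prob_space P by fact
  define T where "T = {\<omega> \<in> space P. Y1 \<omega> \<noteq> 0 \<and> Y2 \<omega> \<noteq> 0}"
  define A where "A j = {\<omega> \<in> space P. Y1 \<omega> = Suc j \<and> Y2 \<omega> = Suc j}" for j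
  have joint_sets [measurable]: "{\<omega> \<in> space P. Y1 \<omega> = j \<and> Y2 \<omega> = k} \<in> sets P" for j k
    by measurable
  have [measurable]: "T \<in> sets P"
    unfolding T_def by measurable
  have "{\<omega> \<in> space P. Y1 \<omega> = Y2 \<omega>} = (\<Union>j. {\<omega> \<in> space P. Y1 \<omega> = j \<and> Y2 \<omega> = j})"
    by auto
  then have [measurable]: "{\<omega> \<in> space P. Y1 \<omega> = Y2 \<omega>} \<in> sets P"
    by simp
  have partial_le_T: "(\<Sum>j\<in>{1..n}. \<Sum>k\<in>{1..n}. \<pi> j k) \<le> prob T" for n
  proof -
    have "(\<Sum>j\<in>{1..n}. \<Sum>k\<in>{1..n}. \<pi> j k)
        = prob (\<Union>(j, k)\<in>{1..n} \<times> {1..n}. {\<omega> \<in> space P. Y1 \<omega> = j \<and> Y2 \<omega> = k})"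
      by (subst finite_measure_finite_Union)
        (auto simp: disjoint_family_on_def sum.cartesian_product joint intro!: sum.cong)
    also have "\<dots> \<le> prob T"
      by (intro finite_measure_mono) (auto simp: T_def)
    finally show ?thesis .
  qed
  have "prob T = 1"
    using prob_le_1 LIMSEQ_le_const2[OF total] partial_le_T by (intro antisym) auto
  then have "AE \<omega> in P. \<omega> \<in> T"
    by (rule AE_prob_1)
  then have "prob {\<omega> \<in> space P. Y1 \<omega> = Y2 \<omega>} = prob (\<Union>j. A j)"
  proof (rule finite_measure_eq_AE[OF AE_mp])
    show "AE \<omega> in P. \<omega> \<in> T \<longrightarrow> (\<omega> \<in> {\<omega> \<in> space P. Y1 \<omega> = Y2 \<omega>}) = (\<omega> \<in> (\<Union>j. A j))"
      by (intro AE_I2) (auto simp: T_def A_def not0_implies_Suc)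
  qed (auto simp: A_def)
  moreover have "(\<lambda>j. prob (A j)) sums prob (\<Union>j. A j)"
    by (intro finite_measure_UNION) (auto simp: A_def disjoint_family_on_def)
  moreover have "prob (A j) = \<pi> (Suc j) (Suc j)" for j
    by (simp add: A_def joint)
  ultimately show ?thesis
    by simp
qed

lemma dgem_V_bounds:
  assumes "0 < M" "0 < \<sigma>"
  shows "0 \<le> dgem_V M \<sigma> Z l x \<omega> \<and> dgem_V M \<sigma> Z l x \<omega> \<le> 1"
  unfolding dgem_V_def using Phi_normal_bounds_measurable(1,2)[OF assms(2)] assms(1)
  by (intro beta1_inv_cdf_bounds)

lemma measurable_dgem_V:
  assumes "0 < \<sigma>" "Z l x \<in> borel_measurable P"
  shows "dgem_V M \<sigma> Z l x \<in> borel_measurable P"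
  unfolding dgem_V_def[abs_def]
  by (rule measurable_compose[OF assms(2) borel_measurable_beta1_inv_cdf_Phi_normal[OF assms(1)]])

lemma integral_dgem_V:
  assumes "0 < M" "0 < \<sigma>" "K 0 = 1"
    and "centered_gaussian_process P S (Z l) (\<lambda>x y. \<sigma>\<^sup>2 * K (x - y))" "x \<in> S"
  shows "(\<integral>\<omega>. dgem_V M \<sigma> Z l x \<omega> \<partial>P) = 1 / (M + 1)"
proof -
  have "distributed P lborel (Z l x) (normal_density 0 (sqrt (\<sigma>\<^sup>2 * K (x - x))))"
    using assms by (intro centered_gaussian_process_distributed) simp_all
  then show ?thesis
    using assms(1-3) by (simp add: dgem_V_def integral_beta1_inv_cdf_Phi_normal)
qed

lemma integral_dgem_V_mult_eq:
  assumes "prob_space P" "0 < M" "0 < \<sigma>"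
    and Z: "centered_gaussian_process P S (Z l) C" "centered_gaussian_process P S (Z l') C"
    and "x \<in> S" "y \<in> S"
  shows "(\<integral>\<omega>. dgem_V M \<sigma> Z l x \<omega> * dgem_V M \<sigma> Z l y \<omega> \<partial>P)
    = (\<integral>\<omega>. dgem_V M \<sigma> Z l' x \<omega> * dgem_V M \<sigma> Z l' y \<omega> \<partial>P)"
proof -
  define G where "G z = beta1_inv_cdf M (Phi_normal \<sigma> z)" for z
  have "G \<in> borel_measurable borel"
    using borel_measurable_beta1_inv_cdf_Phi_normal[OF assms(3)] by (simp add: G_def[abs_def])
  have G_unit: "0 \<le> G z \<and> G z \<le> 1" for z
    using dgem_V_bounds[OF assms(2,3), of "\<lambda>_ _ _. z"] by (simp add: G_def dgem_V_def)
  have "(\<integral>\<omega>. G (Z l x \<omega>) * G (Z l y \<omega>) \<partial>P) = (\<integral>\<omega>. G (Z l' x \<omega>) * G (Z l' y \<omega>) \<partial>P)"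
  proof (rule integral_mult_eq_if_linear_distr_eq[OF assms(1), where f=G and k=G and A="Z l x" and B="Z l y"])
    show "distr P borel (\<lambda>\<omega>. s * Z l x \<omega> + t * Z l y \<omega>) = distr P borel (\<lambda>\<omega>. s * Z l' x \<omega> + t * Z l' y \<omega>)"
      for s t using centered_gaussian_process_distr_eq[OF Z assms(6,7)] .
    show "\<bar>G z\<bar> \<le> 1" "0 \<le> G z \<and> G z \<le> 1" for z
      using G_unit[of z] by simp_all
  qed (use \<open>G \<in> borel_measurable borel\<close> assms(6,7) Z[THEN centered_gaussian_process_measurable] in simp_all)
  then show ?thesis
    by (simp add: dgem_V_def G_def)
qed

lemma indep_unit_pairs_dgem_V:
  fixes P :: "'a measure" and Z :: "nat \<Rightarrow> real \<Rightarrow> 'a \<Rightarrow> real"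
  assumes P: "prob_space P" and "0 < M" "0 < \<sigma>" "K 0 = 1"
    and gp: "\<And>j. j \<ge> 1 \<Longrightarrow> centered_gaussian_process P \<X> (Z j) (\<lambda>x y. \<sigma>\<^sup>2 * K (x - y))"
    and indep: "prob_space.indep_vars P (\<lambda>_. Pi\<^sub>M \<X> (\<lambda>_. borel)) (\<lambda>j \<omega>. restrict (\<lambda>x. Z j x \<omega>) \<X>) {1..}"
    and X: "X1 \<in> \<X>" "X2 \<in> \<X>"
  shows "indep_unit_pairs P (\<lambda>l. dgem_V M \<sigma> Z l X1) (\<lambda>l. dgem_V M \<sigma> Z l X2) (1 / (M + 1)) (1 / (M + 1))
    (\<integral>\<omega>. dgem_V M \<sigma> Z 1 X1 \<omega> * dgem_V M \<sigma> Z 1 X2 \<omega> \<partial>P)"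
proof (intro indep_unit_pairs.intro[OF P] indep_unit_pairs_axioms.intro)
  interpret prob_space P by (rule P)
  fix l :: nat assume l: "1 \<le> l"
  show "dgem_V M \<sigma> Z l X1 \<in> borel_measurable P" "dgem_V M \<sigma> Z l X2 \<in> borel_measurable P"
    using \<open>0 < \<sigma>\<close> centered_gaussian_process_measurable[OF gp[OF l]] X by (simp_all add: measurable_dgem_V)
  show "expectation (dgem_V M \<sigma> Z l X1) = 1 / (M + 1)" "expectation (dgem_V M \<sigma> Z l X2) = 1 / (M + 1)"
    using assms(2-4) gp[OF l] X by (simp_all add: integral_dgem_V)
  show "expectation (\<lambda>\<omega>. dgem_V M \<sigma> Z l X1 \<omega> * dgem_V M \<sigma> Z l X2 \<omega>)
    = expectation (\<lambda>\<omega>. dgem_V M \<sigma> Z 1 X1 \<omega> * dgem_V M \<sigma> Z 1 X2 \<omega>)"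
    using assms(1-3) gp[OF l] gp[OF order_refl] X by (rule integral_dgem_V_mult_eq)
next
  interpret prob_space P by (rule P)
  define G where "G z = beta1_inv_cdf M (Phi_normal \<sigma> z)" for z
  have G: "G \<in> borel_measurable borel"
    using borel_measurable_beta1_inv_cdf_Phi_normal[OF \<open>0 < \<sigma>\<close>] by (simp add: G_def[abs_def])
  have "(\<lambda>f. f x) \<in> Pi\<^sub>M \<X> (\<lambda>_. borel) \<rightarrow>\<^sub>M borel" if "x \<in> \<X>" for x
    using measurable_component_singleton[OF that, of "\<lambda>_. borel"] by simp
  then have "(\<lambda>f. (G (f X1), G (f X2))) \<in> Pi\<^sub>M \<X> (\<lambda>_. borel) \<rightarrow>\<^sub>M borel \<Otimes>\<^sub>M borel"
    using X by (intro measurable_Pair measurable_compose[OF _ G]) simp_all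
  then have "indep_vars (\<lambda>_. borel \<Otimes>\<^sub>M borel)
      (\<lambda>l \<omega>. (\<lambda>f. (G (f X1), G (f X2))) (restrict (\<lambda>x. Z l x \<omega>) \<X>)) {1..}"
    by (rule indep_vars_compose2[OF indep])
  then show "indep_vars (\<lambda>_. borel \<Otimes>\<^sub>M borel) (\<lambda>l \<omega>. (dgem_V M \<sigma> Z l X1 \<omega>, dgem_V M \<sigma> Z l X2 \<omega>)) {1..}"
    using X by (simp add: dgem_V_def G_def)
qed (use dgem_V_bounds[OF assms(2,3)] in simp_all)

lemma dgem_p_eq_stick_weight: "dgem_p M \<sigma> Z j x \<omega> = stick_weight (\<lambda>l. dgem_V M \<sigma> Z l x \<omega>) j"
  by (simp add: dgem_p_def stick_weight_def)

lemma dgem_joint_prob_eq_expectation: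
  assumes "\<And>A j k. A \<in> dgem_sigma P M \<sigma> Z \<X> \<Longrightarrow> j \<ge> 1 \<Longrightarrow> k \<ge> 1 \<Longrightarrow>
      measure P (A \<inter> {\<omega> \<in> space P. Y1 \<omega> = j \<and> Y2 \<omega> = k}) =
      (\<integral>\<omega>. indicator A \<omega> * (dgem_p M \<sigma> Z j X1 \<omega> * dgem_p M \<sigma> Z k X2 \<omega>) \<partial>P)"
    and "1 \<le> j" "1 \<le> k"
  shows "measure P {\<omega> \<in> space P. Y1 \<omega> = j \<and> Y2 \<omega> = k}
    = (\<integral>\<omega>. stick_weight (\<lambda>l. dgem_V M \<sigma> Z l X1 \<omega>) j * stick_weight (\<lambda>l. dgem_V M \<sigma> Z l X2 \<omega>) k \<partial>P)"
proof -
  have "space P \<in> dgem_sigma P M \<sigma> Z \<X>"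
    unfolding dgem_sigma_def by (rule sigma_sets_top)
  from assms(1)[OF this assms(2,3)] show ?thesis
    by (simp add: Int_absorb1 dgem_p_eq_stick_weight) (intro Bochner_Integration.integral_cong refl, simp)
qed

lemma dgem_pair_constants:
  fixes M \<mu> :: real
  assumes "0 < M"
  shows "1 - 1 / (M + 1) - 1 / (M + 1) + \<mu> / (M + 1)\<^sup>2 = (M\<^sup>2 - 1 + \<mu>) / (M + 1)\<^sup>2"
    and "1 / (M + 1) - \<mu> / (M + 1)\<^sup>2 = (M + 1 - \<mu>) / (M + 1)\<^sup>2"
    and "1 - 1 / (M + 1) = M / (M + 1)"
    and "(\<mu> / (M + 1)\<^sup>2) / (1 / (M + 1) + 1 / (M + 1) - \<mu> / (M + 1)\<^sup>2) = \<mu> / (2 * M + 2 - \<mu>)"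
proof -
  define q where "q = M + 1"
  have q: "q \<noteq> 0" and M: "M = q - 1"
    using assms by (simp_all add: q_def)
  have "(\<mu> / q\<^sup>2) / ((2 * q - \<mu>) / q\<^sup>2) = \<mu> / (2 * q - \<mu>)"
    using q by (cases "2 * q - \<mu> = 0") (simp_all add: field_simps)
  then show "1 - 1 / (M + 1) - 1 / (M + 1) + \<mu> / (M + 1)\<^sup>2 = (M\<^sup>2 - 1 + \<mu>) / (M + 1)\<^sup>2"
    "1 / (M + 1) - \<mu> / (M + 1)\<^sup>2 = (M + 1 - \<mu>) / (M + 1)\<^sup>2" "1 - 1 / (M + 1) = M / (M + 1)"
    "(\<mu> / (M + 1)\<^sup>2) / (1 / (M + 1) + 1 / (M + 1) - \<mu> / (M + 1)\<^sup>2) = \<mu> / (2 * M + 2 - \<mu>)"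
    unfolding q_def[symmetric] M using q by (simp_all add: field_simps power2_eq_square)
qed

lemma power_fraction_product:
  fixes q x y z :: real
  assumes "q \<noteq> 0"
  shows "(x / q\<^sup>2) ^ i * (y / q\<^sup>2) * (z / q) ^ d * (1 / q) = y * z ^ d * x ^ i / q ^ (2 * i + d + 3)"
    and "(x / q\<^sup>2) ^ i * (y / q\<^sup>2) = y * x ^ i / q ^ (2 * i + 2)"
  using assms by (simp_all add: power_divide power_mult power_add field_simps power2_eq_square power3_eq_cube)

lemma dgem_joint_weight_neq:
  fixes M \<mu> :: real
  assumes "0 < M" "1 \<le> j" "1 \<le> k" "j \<noteq> k"
  shows "(1 - 1 / (M + 1) - 1 / (M + 1) + \<mu> / (M + 1)\<^sup>2) ^ (min j k - 1) * (1 / (M + 1) - \<mu> / (M + 1)\<^sup>2)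
      * (1 - 1 / (M + 1)) ^ (max j k - min j k - 1) * (1 / (M + 1))
    = (M + 1 - \<mu>) * M ^ (max j k - min j k - 1) * (M\<^sup>2 - 1 + \<mu>) ^ (min j k - 1) / (M + 1) ^ (j + k)"
proof -
  have "(1 - 1 / (M + 1) - 1 / (M + 1) + \<mu> / (M + 1)\<^sup>2) ^ (min j k - 1) * (1 / (M + 1) - \<mu> / (M + 1)\<^sup>2)
      * (1 - 1 / (M + 1)) ^ (max j k - min j k - 1) * (1 / (M + 1))
    = ((M\<^sup>2 - 1 + \<mu>) / (M + 1)\<^sup>2) ^ (min j k - 1) * ((M + 1 - \<mu>) / (M + 1)\<^sup>2)
      * (M / (M + 1)) ^ (max j k - min j k - 1) * (1 / (M + 1))"
    unfolding dgem_pair_constants(1)[OF assms(1)]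
    unfolding dgem_pair_constants(2,3)[OF assms(1)] ..
  also have "\<dots> = (M + 1 - \<mu>) * M ^ (max j k - min j k - 1) * (M\<^sup>2 - 1 + \<mu>) ^ (min j k - 1)
      / (M + 1) ^ (2 * (min j k - 1) + (max j k - min j k - 1) + 3)"
    using assms(1) by (intro power_fraction_product(1)) simp
  also have "2 * (min j k - 1) + (max j k - min j k - 1) + 3 = j + k"
    using assms by (auto simp: min_def max_def)
  finally show ?thesis .
qed

lemma dgem_joint_weight_diag:
  fixes M \<mu> :: real
  assumes "0 < M" "1 \<le> j"
  shows "(1 - 1 / (M + 1) - 1 / (M + 1) + \<mu> / (M + 1)\<^sup>2) ^ (j - 1) * (\<mu> / (M + 1)\<^sup>2)
    = \<mu> * (M\<^sup>2 - 1 + \<mu>) ^ (j - 1) / (M + 1) ^ (2 * j)"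
proof -
  have "(1 - 1 / (M + 1) - 1 / (M + 1) + \<mu> / (M + 1)\<^sup>2) ^ (j - 1) * (\<mu> / (M + 1)\<^sup>2)
      = \<mu> * (M\<^sup>2 - 1 + \<mu>) ^ (j - 1) / (M + 1) ^ (2 * (j - 1) + 2)"
    unfolding dgem_pair_constants(1)[OF assms(1)] using assms(1) by (intro power_fraction_product(2)) simp
  also have "2 * (j - 1) + 2 = 2 * j"
    using assms(2) by simp
  finally show ?thesis .
qed

theorem propositionS4:
  fixes P :: "'a measure"
    and \<X> :: "real set" and M \<sigma>Z :: real and K :: "real \<Rightarrow> real"
    and Z :: "nat \<Rightarrow> real \<Rightarrow> 'a \<Rightarrow> real"
    and X1 X2 :: real and Y1 Y2 :: "'a \<Rightarrow> nat" and \<mu> :: real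
  assumes "prob_space P"
    and "M > 0" and "\<sigma>Z > 0"
    and "K 0 = 1"
    and "\<And>j. j \<ge> 1 \<Longrightarrow> centered_gaussian_process P \<X> (Z j) (\<lambda>x y. \<sigma>Z\<^sup>2 * K (x - y))"
    and "prob_space.indep_vars P (\<lambda>_. Pi\<^sub>M \<X> (\<lambda>_. borel))
           (\<lambda>j \<omega>. restrict (\<lambda>x. Z j x \<omega>) \<X>) {1..}"
    and "X1 \<in> \<X>" and "X2 \<in> \<X>"
    and "Y1 \<in> measurable P (count_space UNIV)" and "Y2 \<in> measurable P (count_space UNIV)"
    and "\<And>A j k. A \<in> dgem_sigma P M \<sigma>Z Z \<X> \<Longrightarrow> j \<ge> 1 \<Longrightarrow> k \<ge> 1 \<Longrightarrow>
           measure P (A \<inter> {\<omega> \<in> space P. Y1 \<omega> = j \<and> Y2 \<omega> = k}) =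
           (\<integral>\<omega>. indicator A \<omega> * (dgem_p M \<sigma>Z Z j X1 \<omega> * dgem_p M \<sigma>Z Z k X2 \<omega>) \<partial>P)"
    and "\<mu> = (M + 1)\<^sup>2 * (\<integral>\<omega>. dgem_V M \<sigma>Z Z 1 X1 \<omega> * dgem_V M \<sigma>Z Z 1 X2 \<omega> \<partial>P)"
  shows "(\<forall>j k. j \<ge> 1 \<longrightarrow> k \<ge> 1 \<longrightarrow> j \<noteq> k \<longrightarrow>
            measure P {\<omega> \<in> space P. Y1 \<omega> = j \<and> Y2 \<omega> = k} =
              (M + 1 - \<mu>) * M ^ (max j k - min j k - 1) * (M\<^sup>2 - 1 + \<mu>) ^ (min j k - 1)
              / (M + 1) ^ (j + k))
       \<and> (\<forall>j. j \<ge> 1 \<longrightarrow>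
            measure P {\<omega> \<in> space P. Y1 \<omega> = j \<and> Y2 \<omega> = j} =
              \<mu> * (M\<^sup>2 - 1 + \<mu>) ^ (j - 1) / (M + 1) ^ (2 * j))
       \<and> measure P {\<omega> \<in> space P. Y1 \<omega> = Y2 \<omega>} = \<mu> / (2 * M + 2 - \<mu>)"
proof -
  interpret prob_space P by (rule assms(1))
  define m where "m = (\<integral>\<omega>. dgem_V M \<sigma>Z Z 1 X1 \<omega> * dgem_V M \<sigma>Z Z 1 X2 \<omega> \<partial>P)"
  interpret pairs: indep_unit_pairs P "\<lambda>l. dgem_V M \<sigma>Z Z l X1" "\<lambda>l. dgem_V M \<sigma>Z Z l X2" "1 / (M + 1)" "1 / (M + 1)" m
    unfolding m_def using assms(1-8) by (rule indep_unit_pairs_dgem_V)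
  have m: "m = \<mu> / (M + 1)\<^sup>2"
    using assms(2,12) by (simp add: m_def)
  define \<pi> where "\<pi> j k = expectation (\<lambda>\<omega>.
    stick_weight (\<lambda>l. dgem_V M \<sigma>Z Z l X1 \<omega>) j * stick_weight (\<lambda>l. dgem_V M \<sigma>Z Z l X2 \<omega>) k)" for j k
  have joint: "measure P {\<omega> \<in> space P. Y1 \<omega> = j \<and> Y2 \<omega> = k} = \<pi> j k" if "1 \<le> j" "1 \<le> k" for j k
    using dgem_joint_prob_eq_expectation[OF assms(11) that] by (simp add: \<pi>_def)
  show ?thesis
  proof (intro conjI allI impI)
    fix j k :: nat assume jk: "1 \<le> j" "1 \<le> k" "j \<noteq> k"
    show "measure P {\<omega> \<in> space P. Y1 \<omega> = j \<and> Y2 \<omega> = k} =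
        (M + 1 - \<mu>) * M ^ (max j k - min j k - 1) * (M\<^sup>2 - 1 + \<mu>) ^ (min j k - 1) / (M + 1) ^ (j + k)"
      unfolding joint[OF jk(1,2)] \<pi>_def pairs.expectation_stick_weight_mult_neq[OF refl jk] m
      by (rule dgem_joint_weight_neq[OF assms(2) jk])
  next
    fix j :: nat assume j: "1 \<le> j"
    show "measure P {\<omega> \<in> space P. Y1 \<omega> = j \<and> Y2 \<omega> = j} = \<mu> * (M\<^sup>2 - 1 + \<mu>) ^ (j - 1) / (M + 1) ^ (2 * j)"
      unfolding joint[OF j j] \<pi>_def pairs.expectation_stick_weight_mult_diag[OF j] m
      by (rule dgem_joint_weight_diag[OF assms(2) j])
  next
    have "(\<lambda>j. \<pi> (Suc j) (Suc j)) sums measure P {\<omega> \<in> space P. Y1 \<omega> = Y2 \<omega>}"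
      using pairs.tendsto_sum_expectation_stick_weight_mult assms(2) unfolding \<pi>_def[abs_def]
      by (intro sums_prob_diagonal[OF assms(1,9,10) joint[unfolded \<pi>_def]]) simp_all
    moreover have "(\<lambda>j. \<pi> (Suc j) (Suc j)) sums (\<mu> / (2 * M + 2 - \<mu>))"
      using pairs.sums_expectation_stick_weight_diag assms(2)
      unfolding \<pi>_def m dgem_pair_constants(4)[OF assms(2)] by simp
    ultimately show "measure P {\<omega> \<in> space P. Y1 \<omega> = Y2 \<omega>} = \<mu> / (2 * M + 2 - \<mu>)"
      by (rule sums_unique2)
  qed
qed

end
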